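(* Let $k$ be an odd positive integer and write $k=ff'$ with positive integers $f,f'$ such that $1<f<k$. If there exist coprime integers $x,y$ with $x^2-(k^2+1)y^2=f'^2$, then $f'$ is not a prime power (i.e. $f'$ is not of the form $p^a$ with $p$ prime and $a\ge 1$). *)

theory Defs
  imports "HOL-Computational_Algebra.Primes"
begin

end

theory Submission
  imports Defs
begin

text \<open>
  The key fact is a descent for the form \<open>x\<^sup>2 - (k\<^sup>2 + 1) y\<^sup>2\<close>: the map
  \<open>(x, y) \<mapsto> ((k\<^sup>2 + 1) y - k x, x - k y)\<close> negates the form, preserves coprimality,
  and, as long as the value \<open>N\<close> satisfies \<open>\<bar>N\<bar> \<le> k\<close>, strictly decreases \<open>\<bar>y\<bar>\<close>;
  descending to \<open>y = 0\<close> shows that such a value with \<open>x, y\<close> coprime is \<open>\<plusminus>1\<close>.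

  Now let \<open>f' = p\<^sup>a\<close>. If \<open>f' \<le> f\<close>, the value \<open>f'\<^sup>2 \<le> k\<close> contradicts the descent.
  Otherwise \<open>p\<close> is odd, \<open>(x - y)(x + y) = f'\<^sup>2 (f\<^sup>2 y\<^sup>2 + 1)\<close>, and \<open>p\<close> cannot divide both
  factors, so \<open>f'\<^sup>2\<close> divides \<open>x - y\<close> or \<open>x + y\<close>. Writing \<open>x = f'\<^sup>2 m \<plusminus> y\<close> produces a
  coprime representation of \<open>-f\<^sup>2\<close>, and \<open>f\<^sup>2 \<le> k\<close> again contradicts the descent.
\<close>

definition pell_form :: "int \<Rightarrow> int \<Rightarrow> int \<Rightarrow> int" where
  "pell_form k x y = x\<^sup>2 - (k\<^sup>2 + 1) * y\<^sup>2"

lemma pell_form_abs [simp]: "pell_form k \<bar>x\<bar> \<bar>y\<bar> = pell_form k x y"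
  by (simp add: pell_form_def)

lemma pell_form_uminus_right [simp]: "pell_form k x (- y) = pell_form k x y"
  by (simp add: pell_form_def)

lemma pell_form_reflect:
  "pell_form k ((k\<^sup>2 + 1) * y - k * x) (x - k * y) = - pell_form k x y"
  by (simp add: pell_form_def power2_eq_square algebra_simps)

lemma coprime_pell_reflect:
  fixes k x y :: int
  assumes "coprime x y"
  shows "coprime ((k\<^sup>2 + 1) * y - k * x) (x - k * y)"
proof (rule coprimeI)
  fix c
  assume "c dvd (k\<^sup>2 + 1) * y - k * x" and "c dvd x - k * y"
  moreover have "x = k * ((k\<^sup>2 + 1) * y - k * x) + (k\<^sup>2 + 1) * (x - k * y)"
    and "y = ((k\<^sup>2 + 1) * y - k * x) + k * (x - k * y)"
    by (simp_all add: power2_eq_square algebra_simps)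
  ultimately have "c dvd x" and "c dvd y"
    by (metis dvd_add dvd_mult)+
  then show "is_unit c"
    using assms coprime_common_divisor by blast
qed

lemma pell_reflect_decreases:
  fixes k x y :: int
  assumes "k \<ge> 1" and "x \<ge> 0" and "y \<ge> 1"
    and small: "\<bar>pell_form k x y\<bar> \<le> k"
  shows "\<bar>x - k * y\<bar> < y"
proof (rule ccontr)
  assume "\<not> \<bar>x - k * y\<bar> < y"
  then consider "x - k * y \<ge> y" | "k * y - x \<ge> y"
    by linarith
  moreover have factor: "(x - k * y) * (x + k * y) = y\<^sup>2 + pell_form k x y"
    by (simp add: pell_form_def power2_eq_square algebra_simps)
  moreover have "y\<^sup>2 \<ge> 1"
    using assms by (simp add: one_le_power)
  then have "k * y\<^sup>2 \<ge> k"
    using assms by simp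
  moreover have "k * y \<ge> 0"
    using assms by simp
  ultimately show False
  proof cases
    case 1
    then have "(x - k * y) * (x + k * y) \<ge> y * (2 * k * y + y)"
      using \<open>k * y \<ge> 0\<close> assms(3) by (intro mult_mono) linarith+
    moreover have "y * (2 * k * y + y) = 2 * (k * y\<^sup>2) + y\<^sup>2"
      by (simp add: power2_eq_square algebra_simps)
    ultimately show False
      using factor small \<open>k * y\<^sup>2 \<ge> k\<close> \<open>k \<ge> 1\<close> by linarith
  next
    case 2
    then have "(k * y - x) * (k * y + x) \<ge> y * (k * y)"
      using assms by (intro mult_mono) auto
    moreover have "(k * y - x) * (k * y + x) = - ((x - k * y) * (x + k * y))"
      and "y * (k * y) = k * y\<^sup>2"
      by (simp_all add: power2_eq_square algebra_simps)
    ultimately show False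
      using factor small \<open>k * y\<^sup>2 \<ge> k\<close> \<open>y\<^sup>2 \<ge> 1\<close> by linarith
  qed
qed

lemma pell_form_small_value:
  fixes k :: int
  assumes "k \<ge> 1" and "coprime x y" and "\<bar>pell_form k x y\<bar> \<le> k"
  shows "\<bar>pell_form k x y\<bar> = 1"
  using assms(2,3)
proof (induction "nat \<bar>y\<bar>" arbitrary: x y rule: less_induct)
  case less
  show ?case
  proof (cases "y = 0")
    case True
    then have "\<bar>x\<bar> = 1"
      using less.prems(1) by simp
    then have "x\<^sup>2 = 1"
      by (metis power2_abs one_power2)
    then show ?thesis
      using True by (simp add: pell_form_def)
  next
    case False
    define X where "X = \<bar>x\<bar>"
    define Y where "Y = \<bar>y\<bar>"
    have "coprime X Y" and small: "\<bar>pell_form k X Y\<bar> \<le> k"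
      using less.prems by (simp_all add: X_def Y_def)
    have "\<bar>X - k * Y\<bar> < Y"
      using pell_reflect_decreases[OF assms(1) _ _ small] False by (simp add: X_def Y_def)
    then have "nat \<bar>X - k * Y\<bar> < nat \<bar>y\<bar>"
      by (simp add: Y_def)
    from less.hyps[OF this coprime_pell_reflect[OF \<open>coprime X Y\<close>]] small
    have "\<bar>pell_form k ((k\<^sup>2 + 1) * Y - k * X) (X - k * Y)\<bar> = 1"
      by (simp add: pell_form_reflect)
    then show ?thesis
      by (simp add: pell_form_reflect X_def Y_def)
  qed
qed

text \<open>
  Writing \<open>x = F'\<^sup>2 m + y\<close> turns the equation into \<open>F'\<^sup>2 m\<^sup>2 + 2 m y - F\<^sup>2 y\<^sup>2 = 1\<close>;
  multiplied by \<open>-F\<^sup>2\<close>, the left-hand side is the form evaluated at \<open>(F\<^sup>2 y - m, m)\<close>.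
\<close>

lemma pell_form_square_value_not_cong:
  fixes F F' x y :: int
  assumes "1 < F" and "F \<le> F'"
    and eq: "pell_form (F * F') x y = F'\<^sup>2"
    and "coprime x y" and "F'\<^sup>2 dvd x - y"
  shows False
proof -
  obtain m where x: "x = F'\<^sup>2 * m + y"
    using \<open>F'\<^sup>2 dvd x - y\<close> by (metis dvd_def diff_add_cancel)
  have "F'\<^sup>2 * (F'\<^sup>2 * m\<^sup>2 + 2 * m * y - F\<^sup>2 * y\<^sup>2) = F'\<^sup>2 * 1"
    using eq by (simp add: x pell_form_def power2_eq_square algebra_simps)
  then have Q: "F'\<^sup>2 * m * m + 2 * m * y - F\<^sup>2 * y * y = 1"
    using assms(1,2) by (simp add: power2_eq_square)
  have "pell_form (F * F') (F\<^sup>2 * y - m) m = - F\<^sup>2 * (F'\<^sup>2 * m * m + 2 * m * y - F\<^sup>2 * y * y)"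
    by (simp add: pell_form_def power2_eq_square algebra_simps)
  with Q have rep: "pell_form (F * F') (F\<^sup>2 * y - m) m = - F\<^sup>2"
    by simp
  have coprime: "coprime (F\<^sup>2 * y - m) m"
  proof (rule coprimeI)
    fix c
    assume "c dvd F\<^sup>2 * y - m" and "c dvd m"
    then have "c dvd F\<^sup>2 * y"
      by (metis diff_add_cancel dvd_add)
    with \<open>c dvd m\<close> have "c dvd F'\<^sup>2 * m * m + 2 * m * y - F\<^sup>2 * y * y"
      by (intro dvd_diff dvd_add) simp_all
    then show "is_unit c"
      using Q by simp
  qed
  have "1 < F * F"
    using less_1_mult[OF assms(1) assms(1)] .
  moreover have "F * F \<le> F * F'"
    using assms(1,2) by (intro mult_left_mono) simp_all
  ultimately have "\<bar>pell_form (F * F') (F\<^sup>2 * y - m) m\<bar> = 1"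
    using rep by (intro pell_form_small_value[OF _ coprime]) (simp_all add: power2_eq_square)
  with rep \<open>1 < F * F\<close> show False
    by (simp add: power2_eq_square)
qed

lemma prime_power_dvd_diff_or_sum:
  fixes p x y :: int
  assumes "prime p" and "\<not> p dvd 2" and "coprime x y"
    and "p ^ n dvd (x - y) * (x + y)"
  shows "p ^ n dvd x - y \<or> p ^ n dvd x + y"
proof (cases "n = 0")
  case False
  have "\<not> (p dvd x - y \<and> p dvd x + y)"
  proof
    assume "p dvd x - y \<and> p dvd x + y"
    moreover have "2 * x = (x + y) + (x - y)" and "2 * y = (x + y) - (x - y)"
      by simp_all
    ultimately have "p dvd 2 * x" and "p dvd 2 * y"
      by (metis dvd_add dvd_diff)+
    with assms(1,2) have "p dvd x" and "p dvd y"
      by (auto dest: prime_dvd_multD)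
    with assms(1,3) show False
      using coprime_common_divisor not_prime_unit by blast
  qed
  then consider "\<not> p dvd x - y" | "\<not> p dvd x + y"
    by blast
  then show ?thesis
  proof cases
    case 1
    with assms(1,4) False show ?thesis
      using prime_power_dvd_multD[OF prime_imp_prime_elem] by blast
  next
    case 2
    moreover have "p ^ n dvd (x + y) * (x - y)"
      using assms(4) by (simp add: mult.commute)
    ultimately show ?thesis
      using assms(1) False prime_power_dvd_multD[OF prime_imp_prime_elem] by blast
  qed
qed simp

lemma pell_form_prime_power_value_cong:
  fixes F p x y :: int
  assumes "prime p" and "\<not> p dvd 2" and "coprime x y"
    and "pell_form (F * p ^ a) x y = (p ^ a)\<^sup>2"
  shows "(p ^ a)\<^sup>2 dvd x - y \<or> (p ^ a)\<^sup>2 dvd x + y"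
proof -
  have "(x - y) * (x + y) = (p ^ a)\<^sup>2 * (F\<^sup>2 * y\<^sup>2 + 1)"
    using assms(4) by (simp add: pell_form_def power2_eq_square algebra_simps)
  moreover have "(p ^ a)\<^sup>2 = p ^ (2 * a)"
    by (simp add: power_mult mult.commute)
  ultimately show ?thesis
    using prime_power_dvd_diff_or_sum[OF assms(1-3), of "2 * a"] by simp
qed

theorem lemma3p3:
  fixes k f f' :: nat and x y :: int
  assumes "odd k" and "k > 0"
    and "k = f * f'" and "f > 0" and "f' > 0"
    and "1 < f" and "f < k"
    and "coprime x y"
    and "x^2 - (int k^2 + 1) * y^2 = (int f')^2"
  shows "\<not> (\<exists>p a. prime p \<and> a \<ge> 1 \<and> f' = p ^ a)"
proof
  assume "\<exists>p a. prime p \<and> a \<ge> 1 \<and> f' = p ^ a"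
  then obtain p a where p: "prime p" and "a \<ge> 1" and f': "f' = p ^ a"
    by blast
  have eq: "pell_form (int f * int f') x y = (int f')\<^sup>2"
    using assms(3,9) by (simp add: pell_form_def power_mult_distrib)
  show False
  proof (cases "f' \<le> f")
    case True
    have "1 < f'"
      unfolding f' using p \<open>a \<ge> 1\<close> by (intro one_less_power prime_gt_1_nat) auto
    then have "1 < (int f')\<^sup>2"
      by (intro one_less_power) simp_all
    moreover have "int f * int f' \<ge> 1"
      using assms(4,5) by (simp add: int_one_le_iff_zero_less)
    moreover have "\<bar>pell_form (int f * int f') x y\<bar> \<le> int f * int f'"
      using True eq by (simp add: power2_eq_square mult_right_mono)
    ultimately show False
      using pell_form_small_value[OF _ assms(8)] eq by (metis abs_of_nat of_nat_power less_irrefl)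
  next
    case False
    have "p dvd k"
      using assms(3) f' \<open>a \<ge> 1\<close> by (simp add: dvd_power)
    with assms(1) p have "\<not> int p dvd 2"
      using primes_dvd_imp_eq[OF p two_is_prime_nat] int_dvd_int_iff[of p 2] by auto
    with p eq assms(8) have "(int f')\<^sup>2 dvd x - y \<or> (int f')\<^sup>2 dvd x - (- y)"
      using pell_form_prime_power_value_cong[of "int p" x y "int f" a] by (simp add: f')
    moreover have "1 < int f" and "int f \<le> int f'"
      using assms(6) False by simp_all
    ultimately show False
      using pell_form_square_value_not_cong eq assms(8)
      by (metis coprime_minus_right_iff pell_form_uminus_right)
  qed
qed

end
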